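(* Let $\eta$ be a homogeneous integrable 2-form of degree two on $\mathbb{C}^4$ with $d\eta=d(z_1z_2)\wedge dz_3\wedge dz_4$ (i.e. $d\eta=i_X\nu$ with $X=z_1\partial/\partial z_1-z_2\partial/\partial z_2$, $\nu=dz_1\wedge\cdots\wedge dz_4$). Then there exist linear forms $A(z_3,z_4),B(z_3,z_4)$, a constant $a\in\mathbb{C}$ and a homogeneous quadratic polynomial $q(z_3,z_4)$ such that $\eta=d(z_1z_2)\wedge\big(A(z_3,z_4)\,dz_3+B(z_3,z_4)\,dz_4\big)+\big(a\,z_1z_2+q(z_3,z_4)\big)\,dz_3\wedge dz_4$.
   Context: A form is homogeneous of degree $m$ if its coefficients are homogeneous polynomials of degree $m$. A holomorphic $q$-form $\eta$ is integrable if every point $p$ outside its zero set has a neighborhood $V$ with holomorphic 1-forms $\omega_1,\dots,\omega_q$ on $V$ such that $\eta|_V=\omega_1\wedge\cdots\wedge\omega_q$ and $d\omega_j\wedge\eta=0$ for all $j$. *)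

theory Defs
  imports "HOL-Analysis.Analysis"
begin

text \<open>Points of C^4 are vectors of type complex^4. The coordinate z_k (k = 1..4)
  is the component at index of_nat k of the numeral type 4 (so z_4 is stored at index 0).\<close>

definition coord :: "nat \<Rightarrow> complex^4 \<Rightarrow> complex" where
  "coord k z = z $ (of_nat k :: 4)"

text \<open>Differential forms on (open subsets of) C^4, in coordinates:
  a 1-form is given by its coefficient functions: omega z k is the coefficient of dz_k (k = 1..4);
  a 2-form eta is given by eta z i j = coefficient of dz_i wedge dz_j for 1 <= i < j <= 4;
  a 3-form by coefficients for 1 <= i < j < k <= 4; a 4-form by its single coefficient
  with respect to dz_1 wedge dz_2 wedge dz_3 wedge dz_4.\<close>

type_synonym form1 = "complex^4 \<Rightarrow> nat \<Rightarrow> complex"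
type_synonym form2 = "complex^4 \<Rightarrow> nat \<Rightarrow> nat \<Rightarrow> complex"
type_synonym form3 = "complex^4 \<Rightarrow> nat \<Rightarrow> nat \<Rightarrow> nat \<Rightarrow> complex"
type_synonym form4 = "complex^4 \<Rightarrow> complex"

definition holo_on :: "(complex^4) set \<Rightarrow> (complex^4 \<Rightarrow> complex) \<Rightarrow> bool" where
  "holo_on V f \<longleftrightarrow> (\<forall>z\<in>V. \<exists>c::nat \<Rightarrow> complex.
      (f has_derivative (\<lambda>h. \<Sum>k=1..4. c k * coord k h)) (at z))"

definition pd :: "nat \<Rightarrow> (complex^4 \<Rightarrow> complex) \<Rightarrow> complex^4 \<Rightarrow> complex" where
  "pd k f z = deriv (\<lambda>t. f (z + axis (of_nat k :: 4) t)) 0"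

definition holo_form1_on :: "(complex^4) set \<Rightarrow> form1 \<Rightarrow> bool" where
  "holo_form1_on V \<omega> \<longleftrightarrow> (\<forall>k\<in>{1..4}. holo_on V (\<lambda>z. \<omega> z k))"

definition wedge11 :: "form1 \<Rightarrow> form1 \<Rightarrow> form2" where
  "wedge11 \<alpha> \<beta> z i j = \<alpha> z i * \<beta> z j - \<alpha> z j * \<beta> z i"

definition d1 :: "form1 \<Rightarrow> form2" where
  "d1 \<omega> z i j = pd i (\<lambda>w. \<omega> w j) z - pd j (\<lambda>w. \<omega> w i) z"

definition d2 :: "form2 \<Rightarrow> form3" where
  "d2 \<eta> z i j k = pd i (\<lambda>w. \<eta> w j k) z - pd j (\<lambda>w. \<eta> w i k) z + pd k (\<lambda>w. \<eta> w i j) z"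

definition wedge22 :: "form2 \<Rightarrow> form2 \<Rightarrow> form4" where
  "wedge22 \<alpha> \<beta> z =
     \<alpha> z 1 2 * \<beta> z 3 4 - \<alpha> z 1 3 * \<beta> z 2 4 + \<alpha> z 1 4 * \<beta> z 2 3
   + \<alpha> z 2 3 * \<beta> z 1 4 - \<alpha> z 2 4 * \<beta> z 1 3 + \<alpha> z 3 4 * \<beta> z 1 2"

definition eq_form2 :: "(complex^4) set \<Rightarrow> form2 \<Rightarrow> form2 \<Rightarrow> bool" where
  "eq_form2 V \<alpha> \<beta> \<longleftrightarrow> (\<forall>z\<in>V. \<forall>i j. 1 \<le> i \<and> i < j \<and> j \<le> 4 \<longrightarrow> \<alpha> z i j = \<beta> z i j)"

definition eq_form3 :: "(complex^4) set \<Rightarrow> form3 \<Rightarrow> form3 \<Rightarrow> bool" where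
  "eq_form3 V \<alpha> \<beta> \<longleftrightarrow>
     (\<forall>z\<in>V. \<forall>i j k. 1 \<le> i \<and> i < j \<and> j < k \<and> k \<le> 4 \<longrightarrow> \<alpha> z i j k = \<beta> z i j k)"

definition zero_set2 :: "form2 \<Rightarrow> (complex^4) set" where
  "zero_set2 \<eta> = {z. \<forall>i j. 1 \<le> i \<and> i < j \<and> j \<le> 4 \<longrightarrow> \<eta> z i j = 0}"

definition homog2_form2 :: "form2 \<Rightarrow> bool" where
  "homog2_form2 \<eta> \<longleftrightarrow> (\<forall>i j. 1 \<le> i \<and> i < j \<and> j \<le> 4 \<longrightarrow>
     (\<exists>c::nat \<Rightarrow> nat \<Rightarrow> complex. \<forall>z. \<eta> z i j = (\<Sum>a=1..4. \<Sum>b=1..4. c a b * coord a z * coord b z)))"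

definition integrable2 :: "form2 \<Rightarrow> bool" where
  "integrable2 \<eta> \<longleftrightarrow> (\<forall>p. p \<notin> zero_set2 \<eta> \<longrightarrow>
     (\<exists>V \<omega>1 \<omega>2. open V \<and> p \<in> V \<and> holo_form1_on V \<omega>1 \<and> holo_form1_on V \<omega>2 \<and>
        eq_form2 V \<eta> (wedge11 \<omega>1 \<omega>2) \<and>
        (\<forall>z\<in>V. wedge22 (d1 \<omega>1) \<eta> z = 0) \<and>
        (\<forall>z\<in>V. wedge22 (d1 \<omega>2) \<eta> z = 0)))"

definition dz :: "nat \<Rightarrow> form1" where
  "dz k z i = (if i = k then 1 else 0)"

definition dz1z2 :: form1 where
  "dz1z2 z i = (if i = 1 then coord 2 z else if i = 2 then coord 1 z else 0)"

definition dz1z2_dz3_dz4 :: form3 where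
  "dz1z2_dz3_dz4 z i j k =
     (if (i, j, k) = (1, 3, 4) then coord 2 z else if (i, j, k) = (2, 3, 4) then coord 1 z else 0)"

end

theory Submission
  imports Defs
begin

(* Integrability forces i\<^sub>X \<eta> = 0. Near a point outside the zero set, \<eta> = \<omega>\<^sub>1 \<and> \<omega>\<^sub>2 with
  d\<omega>\<^sub>j \<and> \<eta> = 0, and the Leibniz rule d\<eta> = d\<omega>\<^sub>1 \<and> \<omega>\<^sub>2 - \<omega>\<^sub>1 \<and> d\<omega>\<^sub>2 turns this into
  d\<eta> \<and> \<omega>\<^sub>j = 0. As d\<eta> = i\<^sub>X \<nu>, this says \<omega>\<^sub>j(X) = 0, hence
  i\<^sub>X \<eta> = \<omega>\<^sub>1(X) \<omega>\<^sub>2 - \<omega>\<^sub>2(X) \<omega>\<^sub>1 = 0.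

  The rest is algebra on the quadratic coefficients of \<eta>. The components of i\<^sub>X \<eta> = 0 read
  z\<^sub>2 \<eta>\<^sub>1\<^sub>2 = 0 and z\<^sub>1 \<eta>\<^sub>1\<^sub>k = z\<^sub>2 \<eta>\<^sub>2\<^sub>k (k = 3, 4), so \<eta>\<^sub>1\<^sub>2 = 0, \<eta>\<^sub>1\<^sub>3 = z\<^sub>2 A, \<eta>\<^sub>2\<^sub>3 = z\<^sub>1 A,
  \<eta>\<^sub>1\<^sub>4 = z\<^sub>2 B, \<eta>\<^sub>2\<^sub>4 = z\<^sub>1 B with A, B linear; such divisibilities follow by continuity from the
  fact that a continuous function killed by a coordinate vanishes. The (1,2,k) components of d\<eta>
  then show that A and B depend on z\<^sub>3, z\<^sub>4 only, and the (1,3,4), (2,3,4) components give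
  \<partial>\<^sub>1 \<eta>\<^sub>3\<^sub>4 = a z\<^sub>2 and \<partial>\<^sub>2 \<eta>\<^sub>3\<^sub>4 = a z\<^sub>1 with a = 1 + \<partial>\<^sub>3 B - \<partial>\<^sub>4 A. *)

lemma of_nat_4_eq_iff: "a \<in> {1..4} \<Longrightarrow> b \<in> {1..4} \<Longrightarrow> (of_nat a :: 4) = of_nat b \<longleftrightarrow> a = b"
  by (auto simp: atLeastAtMost_iff le_Suc_eq numeral_eq_Suc elim!: le_SucE)

lemma coord_add: "coord m (z + w) = coord m z + coord m w"
  by (simp add: coord_def)

lemma coord_axis:
  "m \<in> {1..4} \<Longrightarrow> k \<in> {1..4} \<Longrightarrow> coord m (axis (of_nat k) t) = (if m = k then t else 0)"
  using of_nat_4_eq_iff[of m k] by (auto simp: coord_def axis_def)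

lemma coord_add_axis:
  "m \<in> {1..4} \<Longrightarrow> k \<in> {1..4} \<Longrightarrow> coord m (z + axis (of_nat k) t) = coord m z + (if m = k then t else 0)"
  by (simp add: coord_add coord_axis)

lemma sum_1_4: "(\<Sum>k::nat=1..4. f k) = f 1 + f 2 + f 3 + (f 4 :: 'a::comm_monoid_add)"
  by (simp add: numeral_eq_Suc add.assoc)

lemma bounded_linear_axis: "bounded_linear (axis i :: 'a::euclidean_space \<Rightarrow> 'a^'n)"
  unfolding linear_conv_bounded_linear[symmetric]
  by (rule linearI) (simp_all add: axis_def vec_eq_iff)

lemma continuous_on_axis [continuous_intros]:
  "continuous_on S f \<Longrightarrow> continuous_on S (\<lambda>x. axis i (f x) :: 'a::euclidean_space^'n)"
  by (rule bounded_linear.continuous_on[OF bounded_linear_axis])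

lemma axis_zero [simp]: "axis i 0 = 0"
  by (simp add: axis_def vec_eq_iff)

lemma pd_eqI:
  "((\<lambda>t. f (z + axis (of_nat k) t)) has_field_derivative D) (at 0) \<Longrightarrow> pd k f z = D"
  unfolding pd_def by (rule DERIV_imp_deriv)

lemma holo_on_has_pd:
  assumes "holo_on V f" "z \<in> V" "k \<in> {1..4}"
  shows "((\<lambda>t. f (z + axis (of_nat k) t)) has_field_derivative pd k f z) (at 0)"
proof -
  obtain c where f': "(f has_derivative (\<lambda>h. \<Sum>m=1..4. c m * coord m h)) (at z)"
    using assms(1,2) unfolding holo_on_def by blast
  have line': "((\<lambda>t. z + axis (of_nat k) t) has_derivative axis (of_nat k)) (at 0)"
    using has_derivative_add[OF has_derivative_const
        bounded_linear_imp_has_derivative[OF bounded_linear_axis]] by simp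
  have "(\<Sum>m=1..4. c m * coord m (axis (of_nat k) t)) = (\<Sum>m=1..4. if m = k then c k * t else 0)"
    for t by (rule sum.cong) (use assms(3) in \<open>auto simp: coord_axis\<close>)
  then have "(\<Sum>m=1..4. c m * coord m (axis (of_nat k) t)) = c k * t" for t
    using assms(3) by simp
  moreover have "((\<lambda>t. f (z + axis (of_nat k) t)) has_derivative
      (\<lambda>t. \<Sum>m=1..4. c m * coord m (axis (of_nat k) t))) (at 0)"
    using has_derivative_compose[OF line'] f' by (simp add: o_def)
  ultimately have "((\<lambda>t. f (z + axis (of_nat k) t)) has_derivative (\<lambda>t. c k * t)) (at 0)"
    by simp
  then have "((\<lambda>t. f (z + axis (of_nat k) t)) has_field_derivative c k) (at 0)"
    by (simp add: has_field_derivative_def)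
  moreover from this have "pd k f z = c k" by (rule pd_eqI)
  ultimately show ?thesis by simp
qed

lemma pd_cong_open:
  assumes "open V" "z \<in> V" "\<And>w. w \<in> V \<Longrightarrow> f w = g w"
  shows "pd k f z = pd k g z"
proof -
  have "continuous_on UNIV (\<lambda>t. z + axis (of_nat k) t)"
    by (intro continuous_intros)
  then have "open ((\<lambda>t. z + axis (of_nat k) t) -` V)"
    by (rule open_vimage[OF assms(1)])
  moreover have "0 \<in> (\<lambda>t. z + axis (of_nat k) t) -` V"
    using assms(2) by simp
  ultimately have "\<forall>\<^sub>F t in nhds 0. f (z + axis (of_nat k) t) = g (z + axis (of_nat k) t)"
    using assms(3) by (auto simp: eventually_nhds)
  then show ?thesis
    unfolding pd_def by (rule deriv_cong_ev) simp
qed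

lemma pd_wedge11:
  assumes "holo_form1_on V \<omega>1" "holo_form1_on V \<omega>2" "z \<in> V" "i \<in> {1..4}" "j \<in> {1..4}" "k \<in> {1..4}"
  shows "pd k (\<lambda>w. wedge11 \<omega>1 \<omega>2 w i j) z =
    pd k (\<lambda>w. \<omega>1 w i) z * \<omega>2 z j + \<omega>1 z i * pd k (\<lambda>w. \<omega>2 w j) z
    - (pd k (\<lambda>w. \<omega>1 w j) z * \<omega>2 z i + \<omega>1 z j * pd k (\<lambda>w. \<omega>2 w i) z)"
proof -
  have line': "((\<lambda>t. \<omega> (z + axis (of_nat k) t) m) has_field_derivative pd k (\<lambda>w. \<omega> w m) z) (at 0)"
    if "holo_form1_on V \<omega>" "m \<in> {1..4}" for \<omega> m
    using that assms(3,6) by (intro holo_on_has_pd) (auto simp: holo_form1_on_def)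
  show ?thesis
    unfolding wedge11_def
    using line'[OF assms(1) assms(4)] line'[OF assms(1) assms(5)]
      line'[OF assms(2) assms(4)] line'[OF assms(2) assms(5)]
    by (intro pd_eqI) (auto intro!: derivative_eq_intros)
qed

definition wedge21 :: "form2 \<Rightarrow> form1 \<Rightarrow> form3" where
  "wedge21 \<alpha> \<beta> z i j k = \<alpha> z i j * \<beta> z k - \<alpha> z i k * \<beta> z j + \<alpha> z j k * \<beta> z i"

definition wedge31 :: "form3 \<Rightarrow> form1 \<Rightarrow> form4" where
  "wedge31 \<gamma> \<beta> z =
     \<gamma> z 1 2 3 * \<beta> z 4 - \<gamma> z 1 2 4 * \<beta> z 3 + \<gamma> z 1 3 4 * \<beta> z 2 - \<gamma> z 2 3 4 * \<beta> z 1"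

lemma d2_wedge11:
  assumes "holo_form1_on V \<omega>1" "holo_form1_on V \<omega>2" "z \<in> V" "i \<in> {1..4}" "j \<in> {1..4}" "k \<in> {1..4}"
  shows "d2 (wedge11 \<omega>1 \<omega>2) z i j k = wedge21 (d1 \<omega>1) \<omega>2 z i j k - wedge21 (d1 \<omega>2) \<omega>1 z i j k"
  unfolding d2_def wedge21_def d1_def using assms
  by (simp add: pd_wedge11 algebra_simps)

lemma wedge31_wedge21_left:
  "wedge31 (\<lambda>z i j k. wedge21 \<alpha> b z i j k - wedge21 \<beta> a z i j k) a z = - wedge22 \<alpha> (wedge11 a b) z"
  unfolding wedge31_def wedge21_def wedge22_def wedge11_def by algebra

lemma wedge31_wedge21_right:
  "wedge31 (\<lambda>z i j k. wedge21 \<alpha> b z i j k - wedge21 \<beta> a z i j k) b z = - wedge22 \<beta> (wedge11 a b) z"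
  unfolding wedge31_def wedge21_def wedge22_def wedge11_def by algebra

lemma wedge31_d2_factors_eq_0:
  assumes "open V" "z \<in> V" "holo_form1_on V \<omega>1" "holo_form1_on V \<omega>2"
    and \<eta>: "eq_form2 V \<eta> (wedge11 \<omega>1 \<omega>2)"
    and "wedge22 (d1 \<omega>1) \<eta> z = 0" "wedge22 (d1 \<omega>2) \<eta> z = 0"
  shows "wedge31 (d2 \<eta>) \<omega>1 z = 0" "wedge31 (d2 \<eta>) \<omega>2 z = 0"
proof -
  have "d2 \<eta> z i j k = wedge21 (d1 \<omega>1) \<omega>2 z i j k - wedge21 (d1 \<omega>2) \<omega>1 z i j k"
    if "1 \<le> i" "i < j" "j < k" "k \<le> 4" for i j k
  proof -
    have "pd m (\<lambda>w. \<eta> w p q) z = pd m (\<lambda>w. wedge11 \<omega>1 \<omega>2 w p q) z"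
      if "1 \<le> p" "p < q" "q \<le> 4" for m p q
      using \<eta> that by (intro pd_cong_open[OF assms(1,2)]) (simp add: eq_form2_def)
    then have "d2 \<eta> z i j k = d2 (wedge11 \<omega>1 \<omega>2) z i j k"
      using that by (simp add: d2_def)
    also have "\<dots> = wedge21 (d1 \<omega>1) \<omega>2 z i j k - wedge21 (d1 \<omega>2) \<omega>1 z i j k"
      using that by (intro d2_wedge11[OF assms(3,4,2)]) auto
    finally show ?thesis .
  qed
  then have d2_\<eta>: "wedge31 (d2 \<eta>) \<omega> z =
      wedge31 (\<lambda>z i j k. wedge21 (d1 \<omega>1) \<omega>2 z i j k - wedge21 (d1 \<omega>2) \<omega>1 z i j k) \<omega> z" for \<omega>
    by (simp add: wedge31_def)
  have "wedge22 \<alpha> (wedge11 \<omega>1 \<omega>2) z = wedge22 \<alpha> \<eta> z" for \<alpha>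
    using \<eta> assms(2) by (simp add: wedge22_def eq_form2_def)
  then show "wedge31 (d2 \<eta>) \<omega>1 z = 0" "wedge31 (d2 \<eta>) \<omega>2 z = 0"
    using assms(6,7) by (simp_all add: d2_\<eta> wedge31_wedge21_left wedge31_wedge21_right)
qed

(* Contractions with the vector field X = z\<^sub>1 \<partial>/\<partial>z\<^sub>1 - z\<^sub>2 \<partial>/\<partial>z\<^sub>2; in particular
  dz1z2_dz3_dz4 = i\<^sub>X \<nu>. *)

definition contract_X1 :: "form1 \<Rightarrow> complex^4 \<Rightarrow> complex" where
  "contract_X1 \<omega> z = coord 1 z * \<omega> z 1 - coord 2 z * \<omega> z 2"

definition contract_X2 :: "form2 \<Rightarrow> form1" where
  "contract_X2 \<eta> z k =
     (if k = 1 then coord 2 z * \<eta> z 1 2 else if k = 2 then coord 1 z * \<eta> z 1 2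
      else coord 1 z * \<eta> z 1 k - coord 2 z * \<eta> z 2 k)"

lemma wedge31_dz1z2_dz3_dz4: "wedge31 dz1z2_dz3_dz4 \<omega> z = - contract_X1 \<omega> z"
  by (simp add: wedge31_def dz1z2_dz3_dz4_def contract_X1_def)

lemma contract_X2_wedge11:
  "contract_X2 (wedge11 a b) z k = contract_X1 a z * b z k - contract_X1 b z * a z k"
  by (simp add: contract_X2_def contract_X1_def wedge11_def algebra_simps)

lemma integrable2_contract_X2_eq_0:
  assumes "integrable2 \<eta>" "eq_form3 UNIV (d2 \<eta>) dz1z2_dz3_dz4" "k \<in> {1..4}"
  shows "contract_X2 \<eta> z k = 0"
proof (cases "z \<in> zero_set2 \<eta>")
  case True
  then show ?thesis
    using assms(3) by (auto simp: zero_set2_def contract_X2_def)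
next
  case False
  then obtain V \<omega>1 \<omega>2 where V: "open V" "z \<in> V"
    and \<omega>: "holo_form1_on V \<omega>1" "holo_form1_on V \<omega>2" and \<eta>: "eq_form2 V \<eta> (wedge11 \<omega>1 \<omega>2)"
    and d\<omega>: "wedge22 (d1 \<omega>1) \<eta> z = 0" "wedge22 (d1 \<omega>2) \<eta> z = 0"
    using assms(1) unfolding integrable2_def by metis
  note d\<eta>_\<omega> = wedge31_d2_factors_eq_0[OF V \<omega> \<eta> d\<omega>]
  have "wedge31 (d2 \<eta>) \<omega> z = - contract_X1 \<omega> z" for \<omega>
    using assms(2) by (simp add: eq_form3_def wedge31_def flip: wedge31_dz1z2_dz3_dz4)
  with d\<eta>_\<omega> have "contract_X1 \<omega>1 z = 0" "contract_X1 \<omega>2 z = 0"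
    by simp_all
  moreover have "contract_X2 \<eta> z k = contract_X2 (wedge11 \<omega>1 \<omega>2) z k"
    using \<eta> V(2) assms(3) by (auto simp: eq_form2_def contract_X2_def)
  ultimately show ?thesis
    by (simp add: contract_X2_wedge11)
qed

definition lin_form :: "(nat \<Rightarrow> complex) \<Rightarrow> complex^4 \<Rightarrow> complex" where
  "lin_form l z = (\<Sum>k=1..4. l k * coord k z)"

definition quad_form :: "(nat \<Rightarrow> nat \<Rightarrow> complex) \<Rightarrow> complex^4 \<Rightarrow> complex" where
  "quad_form c z = (\<Sum>a=1..4. \<Sum>b=1..4. c a b * coord a z * coord b z)"

lemma continuous_on_coord [continuous_intros]: "continuous_on S (\<lambda>z. coord k (f z))" if "continuous_on S f"
  unfolding coord_def by (intro continuous_intros that)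

lemma continuous_on_lin_form [continuous_intros]: "continuous_on S (lin_form l)"
  unfolding lin_form_def by (intro continuous_intros)

lemma continuous_on_quad_form [continuous_intros]: "continuous_on S (quad_form c)"
  unfolding quad_form_def by (intro continuous_intros)

lemma continuous_zero_of_coord_mult_zero:
  assumes "continuous_on UNIV f" "\<And>z. coord k z * f z = (0::complex)"
  shows "f z = 0"
proof (cases "coord k z = 0")
  case True
  let ?g = "\<lambda>t. f (z + axis (of_nat k) t)"
  have "?g t = 0" if "t \<noteq> 0" for t
    using assms(2)[of "z + axis (of_nat k) t"] True that by (simp add: coord_def)
  then have "\<forall>\<^sub>F t in at 0. ?g t = 0"
    by (simp add: eventually_at_filter)
  then have "(?g \<longlongrightarrow> 0) (at 0)"
    by (rule tendsto_eventually)
  moreover have "continuous_on UNIV ?g"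
    by (rule continuous_on_compose2[OF assms(1)]) (intro continuous_intros, simp)
  then have "(?g \<longlongrightarrow> ?g 0) (at 0)"
    unfolding continuous_on_def by blast
  ultimately show ?thesis
    using tendsto_unique[OF at_neq_bot] by fastforce
next
  case False
  then show ?thesis using assms(2)[of z] by simp
qed

lemma coord_diff_axis:
  "m \<in> {1..4} \<Longrightarrow> k \<in> {1..4} \<Longrightarrow> coord m (z - axis (of_nat k) t) = coord m z - (if m = k then t else 0)"
  by (simp add: coord_def coord_axis[unfolded coord_def])

lemma quad_form_split:
  assumes "k \<in> {1..4}"
  shows "quad_form c z = coord k z * lin_form (\<lambda>m. c k m + c m k - (if m = k then c k k else 0)) z
    + quad_form c (z - axis (of_nat k) (coord k z))"
proof -
  have "coord m (z - axis (of_nat k) (coord k z)) = (if m = k then 0 else coord m z)"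
    if "m \<in> {1..4}" for m
    using assms that by (simp add: coord_diff_axis)
  from this[of 1] this[of 2] this[of 3] this[of 4] have
    "coord 1 (z - axis (of_nat k) (coord k z)) = (if 1 = k then 0 else coord 1 z)"
    "coord 2 (z - axis (of_nat k) (coord k z)) = (if 2 = k then 0 else coord 2 z)"
    "coord 3 (z - axis (of_nat k) (coord k z)) = (if 3 = k then 0 else coord 3 z)"
    "coord 4 (z - axis (of_nat k) (coord k z)) = (if 4 = k then 0 else coord 4 z)"
    by simp_all
  moreover have "k = 1 \<or> k = 2 \<or> k = 3 \<or> k = 4"
    using assms by auto
  ultimately show ?thesis
    unfolding quad_form_def lin_form_def sum_1_4
    by (elim disjE) (simp_all add: algebra_simps)
qed

lemma quad_form_coord_dvd:
  assumes "i \<in> {1..4}" "j \<in> {1..4}" "i \<noteq> j"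
    and "\<And>z. coord j z = 0 \<Longrightarrow> coord i z * quad_form c z = 0"
  shows "\<exists>l. \<forall>z. quad_form c z = coord j z * lin_form l z"
proof -
  have "coord i z * quad_form c (z - axis (of_nat j) (coord j z)) = 0" for z
    using assms(4)[of "z - axis (of_nat j) (coord j z)"] assms(1-3) by (simp add: coord_diff_axis)
  then have "quad_form c (z - axis (of_nat j) (coord j z)) = 0" for z
    by (rule continuous_zero_of_coord_mult_zero[rotated])
      (rule continuous_on_compose2[of UNIV "quad_form c"]; auto intro!: continuous_intros)
  then have "quad_form c z = coord j z * lin_form (\<lambda>m. c j m + c m j - (if m = j then c j j else 0)) z" for z
    using quad_form_split[OF assms(2), of c z] by simp
  then show ?thesis
    by blast
qed

lemma quad_form_cross_factor:
  assumes "i \<in> {1..4}" "j \<in> {1..4}" "i \<noteq> j"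
    and cross: "\<And>z. coord i z * quad_form c z = coord j z * quad_form c' z"
  shows "\<exists>l. \<forall>z. quad_form c z = coord j z * lin_form l z \<and> quad_form c' z = coord i z * lin_form l z"
proof -
  have "coord i z * quad_form c z = 0" if "coord j z = 0" for z
    using cross[of z] that by simp
  then obtain l where l: "\<And>z. quad_form c z = coord j z * lin_form l z"
    using quad_form_coord_dvd[OF assms(1-3)] by blast
  have "coord j z * quad_form c' z = 0" if "coord i z = 0" for z
    using cross[of z] that by simp
  then obtain l' where l': "\<And>z. quad_form c' z = coord i z * lin_form l' z"
    using quad_form_coord_dvd[OF assms(2,1) assms(3)[symmetric]] by blast
  have "coord j z * (coord i z * (lin_form l z - lin_form l' z)) = 0" for z
    using cross[of z] by (simp add: l l' algebra_simps)
  then have "coord i z * (lin_form l z - lin_form l' z) = 0" for z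
    by (rule continuous_zero_of_coord_mult_zero[rotated]) (intro continuous_intros)
  then have "lin_form l z - lin_form l' z = 0" for z
    by (rule continuous_zero_of_coord_mult_zero[rotated]) (intro continuous_intros)
  then show ?thesis
    using l l' by auto
qed

lemma has_field_derivative_coord_line:
  "m \<in> {1..4} \<Longrightarrow> k \<in> {1..4} \<Longrightarrow>
    ((\<lambda>t. coord m (z + axis (of_nat k) t)) has_field_derivative (if m = k then 1 else 0)) (at 0)"
  by (cases "m = k") (auto simp: coord_add_axis intro!: derivative_eq_intros)

lemma pd_quad_form:
  assumes "k \<in> {1..4}"
  shows "pd k (quad_form c) z = lin_form (\<lambda>m. c k m + c m k) z"
proof (rule pd_eqI)
  have "k = 1 \<or> k = 2 \<or> k = 3 \<or> k = 4"
    using assms by auto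
  then have "(\<Sum>a=1..4. \<Sum>b=1..4. c a b * ((if a = k then 1 else 0) * coord b z + coord a z * (if b = k then 1 else 0)))
      = lin_form (\<lambda>m. c k m + c m k) z"
    unfolding lin_form_def sum_1_4 by (elim disjE) (simp_all add: algebra_simps)
  moreover have "((\<lambda>t. quad_form c (z + axis (of_nat k) t)) has_field_derivative
      (\<Sum>a=1..4. \<Sum>b=1..4. c a b * ((if a = k then 1 else 0) * coord b z + coord a z * (if b = k then 1 else 0)))) (at 0)"
    unfolding quad_form_def using assms
    by (auto intro!: derivative_eq_intros has_field_derivative_coord_line sum.cong)
  ultimately show "((\<lambda>t. quad_form c (z + axis (of_nat k) t)) has_field_derivative lin_form (\<lambda>m. c k m + c m k) z) (at 0)"
    by simp
qed

lemma pd_coord_mult_lin_form: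
  assumes "j \<in> {1..4}" "k \<in> {1..4}"
  shows "pd k (\<lambda>w. coord j w * lin_form l w) z = (if j = k then lin_form l z else 0) + coord j z * l k"
proof (rule pd_eqI)
  have "(\<Sum>m=1..4. l m * (if m = k then 1 else 0)) = (\<Sum>m=1..4. if m = k then l m else 0)"
    by (rule sum.cong) auto
  then have "(\<Sum>m=1..4. l m * (if m = k then 1 else 0)) = l k"
    using assms(2) by simp
  moreover have "((\<lambda>t. coord j (z + axis (of_nat k) t) * lin_form l (z + axis (of_nat k) t)) has_field_derivative
      (if j = k then 1 else 0) * lin_form l z + coord j z * (\<Sum>m=1..4. l m * (if m = k then 1 else 0))) (at 0)"
    unfolding lin_form_def using assms
    by (auto intro!: derivative_eq_intros has_field_derivative_coord_line sum.cong)
  ultimately show "((\<lambda>t. coord j (z + axis (of_nat k) t) * lin_form l (z + axis (of_nat k) t)) has_field_derivative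
      (if j = k then lin_form l z else 0) + coord j z * l k) (at 0)"
    by (cases "j = k") simp_all
qed

lemma pd_zero: "pd k (\<lambda>w. 0) z = 0"
  by (simp add: pd_def)

lemma lin_form_axis:
  assumes "k \<in> {1..4}"
  shows "lin_form l (axis (of_nat k) 1) = l k"
proof -
  have "lin_form l (axis (of_nat k) 1) = (\<Sum>m=1..4. if m = k then l m else 0)"
    unfolding lin_form_def by (rule sum.cong) (use assms in \<open>auto simp: coord_axis\<close>)
  then show ?thesis
    using assms by simp
qed

lemma quad_form_of_pd_1_2:
  assumes "\<And>z. pd 1 (quad_form c) z = a * coord 2 z" "\<And>z. pd 2 (quad_form c) z = a * coord 1 z"
  shows "quad_form c z = a * coord 1 z * coord 2 z
    + (c 3 3 * coord 3 z ^ 2 + (c 3 4 + c 4 3) * coord 3 z * coord 4 z + c 4 4 * coord 4 z ^ 2)"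
proof -
  have "c 1 n + c n 1 = (if n = 2 then a else 0) \<and> c 2 n + c n 2 = (if n = 1 then a else 0)"
    if "n \<in> {1..4}" for n
    using assms[of "axis (of_nat n) 1"] that by (simp add: pd_quad_form lin_form_axis coord_axis)
  from this[of 1] this[of 2] this[of 3] this[of 4] show ?thesis
    unfolding quad_form_def sum_1_4 by simp algebra
qed

lemma homog2_form2_quad_form:
  "homog2_form2 \<eta> \<Longrightarrow> 1 \<le> i \<Longrightarrow> i < j \<Longrightarrow> j \<le> 4 \<Longrightarrow> \<exists>c. (\<lambda>z. \<eta> z i j) = quad_form c"
  unfolding homog2_form2_def quad_form_def by fast

lemma eta12_eq_0:
  assumes "homog2_form2 \<eta>" "\<And>z. contract_X2 \<eta> z 1 = 0"
  shows "\<eta> z 1 2 = 0"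
proof -
  obtain c where c: "(\<lambda>z. \<eta> z 1 2) = quad_form c"
    using homog2_form2_quad_form[OF assms(1)] by fastforce
  have "coord 2 z * quad_form c z = 0" for z
    using assms(2)[of z] c by (simp add: contract_X2_def fun_eq_iff)
  then have "quad_form c z = 0"
    by (rule continuous_zero_of_coord_mult_zero[rotated]) (intro continuous_intros)
  then show ?thesis
    using c by (simp add: fun_eq_iff)
qed

lemma eta_mixed_linear_factor:
  assumes "homog2_form2 \<eta>" "\<And>z k. k \<in> {1..4} \<Longrightarrow> contract_X2 \<eta> z k = 0"
    and "eq_form3 UNIV (d2 \<eta>) dz1z2_dz3_dz4" and k: "k \<in> {3, 4}"
  shows "\<exists>l. l 1 = 0 \<and> l 2 = 0 \<and>
    (\<lambda>z. \<eta> z 1 k) = (\<lambda>z. coord 2 z * lin_form l z) \<and> (\<lambda>z. \<eta> z 2 k) = (\<lambda>z. coord 1 z * lin_form l z)"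
proof -
  obtain c c' where c: "(\<lambda>z. \<eta> z 1 k) = quad_form c" "(\<lambda>z. \<eta> z 2 k) = quad_form c'"
    using homog2_form2_quad_form[OF assms(1)] k by fastforce
  have "coord 1 z * quad_form c z = coord 2 z * quad_form c' z" for z
    using assms(2)[of k z] c k by (auto simp: contract_X2_def fun_eq_iff)
  then obtain l where l: "(\<lambda>z. \<eta> z 1 k) = (\<lambda>z. coord 2 z * lin_form l z)"
      "(\<lambda>z. \<eta> z 2 k) = (\<lambda>z. coord 1 z * lin_form l z)"
    using quad_form_cross_factor[of 1 2 c c'] c by auto
  have \<eta>12: "(\<lambda>z. \<eta> z 1 2) = (\<lambda>z. 0)"
    using eta12_eq_0[OF assms(1,2)] by auto
  have "d2 \<eta> z 1 2 k = 0" for z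
    using assms(3) k by (auto simp: eq_form3_def dz1z2_dz3_dz4_def)
  then have "pd 1 (\<lambda>w. coord 1 w * lin_form l w) z - pd 2 (\<lambda>w. coord 2 w * lin_form l w) z
      + pd k (\<lambda>w. 0) z = 0" for z
    unfolding d2_def l \<eta>12 .
  then have "coord 1 z * l 1 - coord 2 z * l 2 = 0" for z
    by (simp add: pd_coord_mult_lin_form pd_zero)
  from this[of "axis 1 1"] this[of "axis 2 1"] have "l 1 = 0" "l 2 = 0"
    by (simp_all add: coord_def axis_def)
  with l show ?thesis
    by blast
qed

lemma eta34_normal_form:
  assumes "homog2_form2 \<eta>" "eq_form3 UNIV (d2 \<eta>) dz1z2_dz3_dz4"
    and l: "(\<lambda>z. \<eta> z 1 3) = (\<lambda>z. coord 2 z * lin_form l z)" "(\<lambda>z. \<eta> z 2 3) = (\<lambda>z. coord 1 z * lin_form l z)"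
    and m: "(\<lambda>z. \<eta> z 1 4) = (\<lambda>z. coord 2 z * lin_form m z)" "(\<lambda>z. \<eta> z 2 4) = (\<lambda>z. coord 1 z * lin_form m z)"
  shows "\<exists>q33 q34 q44. \<forall>z. \<eta> z 3 4 = (1 + m 3 - l 4) * coord 1 z * coord 2 z
    + (q33 * coord 3 z ^ 2 + q34 * coord 3 z * coord 4 z + q44 * coord 4 z ^ 2)"
proof -
  obtain c where c: "(\<lambda>z. \<eta> z 3 4) = quad_form c"
    using homog2_form2_quad_form[OF assms(1)] by fastforce
  have "d2 \<eta> z 1 3 4 = coord 2 z" "d2 \<eta> z 2 3 4 = coord 1 z" for z
    using assms(2) by (auto simp: eq_form3_def dz1z2_dz3_dz4_def)
  then have "pd 1 (quad_form c) z - pd 3 (\<lambda>w. coord 2 w * lin_form m w) z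
        + pd 4 (\<lambda>w. coord 2 w * lin_form l w) z = coord 2 z"
      "pd 2 (quad_form c) z - pd 3 (\<lambda>w. coord 1 w * lin_form m w) z
        + pd 4 (\<lambda>w. coord 1 w * lin_form l w) z = coord 1 z" for z
    unfolding d2_def c l m by auto
  then have "pd 1 (quad_form c) z = (1 + m 3 - l 4) * coord 2 z"
      "pd 2 (quad_form c) z = (1 + m 3 - l 4) * coord 1 z" for z
    by (simp_all add: pd_coord_mult_lin_form) (simp_all add: algebra_simps eq_diff_eq)
  then show ?thesis
    using quad_form_of_pd_1_2 c by (metis (no_types, lifting))
qed

lemma eq_form2_normal_formI:
  assumes "\<And>z. \<eta> z 1 2 = 0"
    and "\<And>z. \<eta> z 1 3 = coord 2 z * (\<alpha>3 * coord 3 z + \<alpha>4 * coord 4 z)"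
    and "\<And>z. \<eta> z 2 3 = coord 1 z * (\<alpha>3 * coord 3 z + \<alpha>4 * coord 4 z)"
    and "\<And>z. \<eta> z 1 4 = coord 2 z * (\<beta>3 * coord 3 z + \<beta>4 * coord 4 z)"
    and "\<And>z. \<eta> z 2 4 = coord 1 z * (\<beta>3 * coord 3 z + \<beta>4 * coord 4 z)"
    and "\<And>z. \<eta> z 3 4 = a * coord 1 z * coord 2 z
                 + (q33 * coord 3 z ^ 2 + q34 * coord 3 z * coord 4 z + q44 * coord 4 z ^ 2)"
  shows "eq_form2 UNIV \<eta>
       (\<lambda>z i j. wedge11 dz1z2
                  (\<lambda>w k. (\<alpha>3 * coord 3 w + \<alpha>4 * coord 4 w) * dz 3 w k
                        + (\<beta>3 * coord 3 w + \<beta>4 * coord 4 w) * dz 4 w k) z i j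
              + (a * coord 1 z * coord 2 z
                 + (q33 * coord 3 z ^ 2 + q34 * coord 3 z * coord 4 z + q44 * coord 4 z ^ 2))
                * wedge11 (dz 3) (dz 4) z i j)"
  unfolding eq_form2_def
proof (intro ballI allI impI)
  fix z :: "complex^4" and i j :: nat
  assume "1 \<le> i \<and> i < j \<and> j \<le> 4"
  then have "(i, j) \<in> {(1, 2), (1, 3), (1, 4), (2, 3), (2, 4), (3, 4)}"
    by auto
  then show "\<eta> z i j = wedge11 dz1z2
                  (\<lambda>w k. (\<alpha>3 * coord 3 w + \<alpha>4 * coord 4 w) * dz 3 w k
                        + (\<beta>3 * coord 3 w + \<beta>4 * coord 4 w) * dz 4 w k) z i j
              + (a * coord 1 z * coord 2 z
                 + (q33 * coord 3 z ^ 2 + q34 * coord 3 z * coord 4 z + q44 * coord 4 z ^ 2))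
                * wedge11 (dz 3) (dz 4) z i j"
    by (elim insertE emptyE) (simp_all add: wedge11_def dz1z2_def dz_def assms assms[unfolded One_nat_def] algebra_simps)
qed

theorem mainTheorem18:
  fixes \<eta> :: form2
  assumes "homog2_form2 \<eta>"
    and "integrable2 \<eta>"
    and "eq_form3 UNIV (d2 \<eta>) dz1z2_dz3_dz4"
  shows "\<exists>(\<alpha>3::complex) \<alpha>4 \<beta>3 \<beta>4 (a::complex) q33 q34 q44.
     eq_form2 UNIV \<eta>
       (\<lambda>z i j. wedge11 dz1z2
                  (\<lambda>w k. (\<alpha>3 * coord 3 w + \<alpha>4 * coord 4 w) * dz 3 w k
                        + (\<beta>3 * coord 3 w + \<beta>4 * coord 4 w) * dz 4 w k) z i j
              + (a * coord 1 z * coord 2 z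
                 + (q33 * coord 3 z ^ 2 + q34 * coord 3 z * coord 4 z + q44 * coord 4 z ^ 2))
                * wedge11 (dz 3) (dz 4) z i j)"
proof -
  have i_X_\<eta>: "contract_X2 \<eta> z k = 0" if "k \<in> {1..4}" for z k
    using integrable2_contract_X2_eq_0[OF assms(2,3) that] .
  obtain l where l: "l 1 = 0" "l 2 = 0"
      "(\<lambda>z. \<eta> z 1 3) = (\<lambda>z. coord 2 z * lin_form l z)" "(\<lambda>z. \<eta> z 2 3) = (\<lambda>z. coord 1 z * lin_form l z)"
    using eta_mixed_linear_factor[OF assms(1) i_X_\<eta> assms(3), of 3] by auto
  obtain m where m: "m 1 = 0" "m 2 = 0"
      "(\<lambda>z. \<eta> z 1 4) = (\<lambda>z. coord 2 z * lin_form m z)" "(\<lambda>z. \<eta> z 2 4) = (\<lambda>z. coord 1 z * lin_form m z)"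
    using eta_mixed_linear_factor[OF assms(1) i_X_\<eta> assms(3), of 4] by auto
  obtain q33 q34 q44 where "\<And>z. \<eta> z 3 4 = (1 + m 3 - l 4) * coord 1 z * coord 2 z
      + (q33 * coord 3 z ^ 2 + q34 * coord 3 z * coord 4 z + q44 * coord 4 z ^ 2)"
    using eta34_normal_form[OF assms(1,3) l(3,4) m(3,4)] by blast
  moreover have "lin_form l z = l 3 * coord 3 z + l 4 * coord 4 z"
      "lin_form m z = m 3 * coord 3 z + m 4 * coord 4 z" for z
    unfolding lin_form_def sum_1_4 using l(1,2) m(1,2) by simp_all
  ultimately show ?thesis
    using eta12_eq_0[OF assms(1) i_X_\<eta>] l(3,4) m(3,4)
    by (intro exI eq_form2_normal_formI) (auto simp: fun_eq_iff)
qed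

end
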